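(* Let $(a_i)_{i\in\mathbb Z},(b_i)_{i\in\mathbb Z}$ be finitely supported sequences of integers and put $q_i=a_i-b_i$. The following three sets of conditions are equivalent. (1) With $q_\sigma$ the lowest nonzero $q_i$: (a) $a_l=0$ for $l<\sigma$; (b) $a_\sigma=q_\sigma>0$; (c) $\max(q_l,0)\le a_l<\sum_{i\le l}q_i$ for $l>\sigma$. (2) With $a_\sigma$ the lowest nonzero $a_i$: (a) all $a_i,b_i$ are nonnegative; (b) $b_i=0$ for $i\le\sigma$; (c) $\sum_{i\le l}b_i<\sum_{i<l}a_i$ for all $l>\sigma$. (3) With $m=\sum_ia_i$, $n=\sum_ib_i$: (a) all $a_i,b_i$ are nonnegative; (b) $n<m$; (c) for all $(\alpha,\beta)\in R_{m,n}$ with $\beta\ge\alpha-1$ one has $(\alpha,\beta)\in L_{a,b}$.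
   Context: For positive integers $m,n$, $R_{m,n}=\{(\alpha,\beta)\in\mathbb Z^2\mid1\le\alpha\le m,\ 1\le\beta\le n\}$. For a finitely supported sequence $(c_i)$ of nonnegative integers, $S(c)$ is the nondecreasing finite sequence of integers in which each integer $i$ appears exactly $c_i$ times, indexed starting from $1$ (so $S(c)$ has length $\sum_ic_i$). For nonnegative finitely supported $(a_i),(b_i)$ with $m=\sum_ia_i$, $n=\sum_ib_i$, put $L_{a,b}=\{(\alpha,\beta)\in R_{m,n}\mid S(a)_\alpha<S(b)_\beta\}$. *)

theory Defs
  imports Main
begin

definition fsum :: "(int \<Rightarrow> int) \<Rightarrow> (int \<Rightarrow> bool) \<Rightarrow> int" where
  "fsum f P = sum f {i. P i \<and> f i \<noteq> 0}"

text \<open>S(c): the nondecreasing list in which each integer i occurs c_i times.\<close>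
definition Sseq :: "(int \<Rightarrow> int) \<Rightarrow> int list" where
  "Sseq c = concat (map (\<lambda>i. replicate (nat (c i)) i) (sorted_list_of_set {i. c i \<noteq> 0}))"

text \<open>1-based indexing into S(c).\<close>
definition Sat :: "(int \<Rightarrow> int) \<Rightarrow> int \<Rightarrow> int" where
  "Sat c \<alpha> = Sseq c ! nat (\<alpha> - 1)"

definition Rrect :: "int \<Rightarrow> int \<Rightarrow> (int \<times> int) set" where
  "Rrect m n = {(\<alpha>, \<beta>). 1 \<le> \<alpha> \<and> \<alpha> \<le> m \<and> 1 \<le> \<beta> \<and> \<beta> \<le> n}"

definition Lset :: "(int \<Rightarrow> int) \<Rightarrow> (int \<Rightarrow> int) \<Rightarrow> (int \<times> int) set" where
  "Lset a b = {(\<alpha>, \<beta>) \<in> Rrect (fsum a (\<lambda>_. True)) (fsum b (\<lambda>_. True)).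
                Sat a \<alpha> < Sat b \<beta>}"

end

theory Submission
  imports Defs
begin

text \<open>Because \<open>S(c)\<close> is sorted, for nonnegative \<open>c\<close> and \<open>1 \<le> \<alpha> \<le> |S(c)|\<close> one has
  \<open>S(c)\<^sub>\<alpha> \<le> l\<close> iff \<open>\<alpha> \<le> \<Sum>\<^sub>i\<^sub>\<le>\<^sub>l c\<^sub>i\<close>: positions in \<open>S(c)\<close> and values are related by a
  Galois connection. Through it, the inequalities \<open>S(a)\<^sub>\<alpha> < S(b)\<^sub>\<beta>\<close> for \<open>\<alpha> \<le> \<beta> + 1\<close> in (3)
  become the prefix-sum inequalities of (2), the extreme case \<open>\<alpha> = \<beta> + 1\<close> being the decisive one.
  Conditions (1) and (2) agree term by term because
  \<open>\<Sum>\<^sub>i\<^sub>\<le>\<^sub>l q\<^sub>i = \<Sum>\<^sub>i\<^sub><\<^sub>l a\<^sub>i + a\<^sub>l - \<Sum>\<^sub>i\<^sub>\<le>\<^sub>l b\<^sub>i\<close>.\<close>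

lemma fsum_eq_sum_superset:
  assumes "finite F" "{i. f i \<noteq> 0} \<subseteq> F"
  shows "fsum f P = sum f {i\<in>F. P i}"
  unfolding fsum_def by (rule sum.mono_neutral_left) (use assms in auto)

lemma fsum_diff:
  assumes "finite {i. f i \<noteq> 0}" "finite {i. g i \<noteq> 0}"
  shows "fsum (\<lambda>i. f i - g i) P = fsum f P - fsum g P"
proof -
  let ?F = "{i. f i \<noteq> 0} \<union> {i. g i \<noteq> 0}"
  have "fsum (\<lambda>i. f i - g i) P = sum (\<lambda>i. f i - g i) {i\<in>?F. P i}"
    by (rule fsum_eq_sum_superset) (use assms in auto)
  also have "\<dots> = sum f {i\<in>?F. P i} - sum g {i\<in>?F. P i}"
    by (simp add: sum_subtractf)
  also have "\<dots> = fsum f P - fsum g P"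
    by (subst (1 2) fsum_eq_sum_superset[of ?F]) (use assms in auto)
  finally show ?thesis .
qed

lemma fsum_atMost_eq_lessThan_plus:
  assumes "finite {i. f i \<noteq> 0}"
  shows "fsum f (\<lambda>i. i \<le> l) = fsum f (\<lambda>i. i < (l::int)) + f l"
proof -
  let ?F = "insert l {i. f i \<noteq> 0}"
  have "fsum f (\<lambda>i. i \<le> l) = sum f {i\<in>?F. i \<le> l}"
    and "fsum f (\<lambda>i. i < l) = sum f {i\<in>?F. i < l}"
    by (rule fsum_eq_sum_superset; use assms in auto)+
  moreover have "{i\<in>?F. i \<le> l} = insert l {i\<in>?F. i < l}" by auto
  ultimately show ?thesis using assms by simp
qed

lemma fsum_nonneg: "(\<And>i. 0 \<le> f i) \<Longrightarrow> 0 \<le> fsum f P"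
  unfolding fsum_def by (simp add: sum_nonneg)

lemma fsum_mono_pred:
  assumes "finite {i. f i \<noteq> 0}" "\<And>i. 0 \<le> f i" "\<And>i. P i \<Longrightarrow> Q i"
  shows "fsum f P \<le> fsum f Q"
  unfolding fsum_def by (rule sum_mono2) (use assms in \<open>auto intro: finite_subset\<close>)

lemma fsum_eq_0: "(\<And>i. P i \<Longrightarrow> f i = 0) \<Longrightarrow> fsum f P = 0"
  unfolding fsum_def by auto

lemma fsum_eq_total: "(\<And>i. f i \<noteq> 0 \<Longrightarrow> P i) \<Longrightarrow> fsum f P = fsum f (\<lambda>_. True)"
  unfolding fsum_def by metis

lemma sorted_nth_le_iff_less_length_filter:
  assumes "sorted xs" "k < length xs"
  shows "xs ! k \<le> l \<longleftrightarrow> k < length (filter (\<lambda>x. x \<le> l) xs)"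
  using assms
proof (induction xs arbitrary: k)
  case Nil
  then show ?case by simp
next
  case (Cons x xs)
  show ?case
  proof (cases "x \<le> l")
    case True
    then show ?thesis using Cons by (cases k) auto
  next
    case False
    with Cons.prems have "\<forall>y\<in>set (x # xs). \<not> y \<le> l"
      by (auto dest: order_trans)
    then show ?thesis
      using Cons.prems(2) nth_mem[of k "x # xs"] by (auto simp: filter_empty_conv)
  qed
qed

lemma sorted_Sseq: "sorted (Sseq c)"
proof -
  have "sorted (concat (map (\<lambda>i. replicate (f i) i) xs))" if "sorted xs" for f and xs :: "int list"
    using that by (induction xs) (auto simp: sorted_append)
  then show ?thesis unfolding Sseq_def by simp
qed

lemma length_filter_Sseq:
  assumes "finite {i. c i \<noteq> 0}" "\<And>i. 0 \<le> c i"
  shows "int (length (filter P (Sseq c))) = fsum c P"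
proof -
  let ?S = "{i. c i \<noteq> 0}"
  have "length (filter P (Sseq c))
      = sum_list (map (\<lambda>i. if P i then nat (c i) else 0) (sorted_list_of_set ?S))"
    unfolding Sseq_def filter_concat length_concat
    by (simp add: o_def filter_replicate if_distrib cong: if_cong)
  also have "\<dots> = sum (\<lambda>i. if P i then nat (c i) else 0) ?S"
    using assms(1) by (simp add: sum_list_distinct_conv_sum_set)
  finally have "int (length (filter P (Sseq c))) = sum (\<lambda>i. int (if P i then nat (c i) else 0)) ?S"
    by simp
  also have "\<dots> = sum (\<lambda>i. if P i then c i else 0) ?S"
    using assms(2) by (intro sum.cong) auto
  also have "\<dots> = fsum c P"
    using assms(1) unfolding fsum_def by (simp add: sum.inter_filter[symmetric] conj_commute)
  finally show ?thesis .
qed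

lemma Sat_le_iff:
  assumes "finite {i. c i \<noteq> 0}" "\<And>i. 0 \<le> c i" "1 \<le> \<alpha>" "\<alpha> \<le> fsum c (\<lambda>_. True)"
  shows "Sat c \<alpha> \<le> l \<longleftrightarrow> \<alpha> \<le> fsum c (\<lambda>i. i \<le> l)"
proof -
  have "nat (\<alpha> - 1) < length (Sseq c)"
    using length_filter_Sseq[OF assms(1,2), of "\<lambda>_. True"] assms(3,4) by simp
  then have "Sat c \<alpha> \<le> l \<longleftrightarrow> nat (\<alpha> - 1) < length (filter (\<lambda>x. x \<le> l) (Sseq c))"
    unfolding Sat_def by (rule sorted_nth_le_iff_less_length_filter[OF sorted_Sseq])
  also have "\<dots> \<longleftrightarrow> \<alpha> \<le> fsum c (\<lambda>i. i \<le> l)"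
    using length_filter_Sseq[OF assms(1,2), of "\<lambda>i. i \<le> l"] assms(3) by linarith
  finally show ?thesis .
qed

lemma Sat_less_iff:
  assumes "finite {i. c i \<noteq> 0}" "\<And>i. 0 \<le> c i" "1 \<le> \<alpha>" "\<alpha> \<le> fsum c (\<lambda>_. True)"
  shows "Sat c \<alpha> < l \<longleftrightarrow> \<alpha> \<le> fsum c (\<lambda>i. i < l)"
  using Sat_le_iff[OF assms, of "l - 1"] by simp

lemma fsum_diff_atMost:
  assumes "finite {i. a i \<noteq> 0}" "finite {i. b i \<noteq> 0}"
  shows "fsum (\<lambda>i. a i - b i) (\<lambda>i. i \<le> l)
    = fsum a (\<lambda>i. i < l) + a l - fsum b (\<lambda>i. i \<le> (l::int))"
  using fsum_diff[OF assms] fsum_atMost_eq_lessThan_plus[OF assms(1)] by simp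

definition difference_condition :: "(int \<Rightarrow> int) \<Rightarrow> (int \<Rightarrow> int) \<Rightarrow> bool" where
  "difference_condition a q \<longleftrightarrow>
     (\<exists>\<sigma>. q \<sigma> \<noteq> 0 \<and> (\<forall>i<\<sigma>. q i = 0) \<and> (\<forall>l<\<sigma>. a l = 0) \<and> a \<sigma> = q \<sigma> \<and> q \<sigma> > 0 \<and>
         (\<forall>l>\<sigma>. max (q l) 0 \<le> a l \<and> a l < fsum q (\<lambda>i. i \<le> l)))"

definition prefix_sum_condition :: "(int \<Rightarrow> int) \<Rightarrow> (int \<Rightarrow> int) \<Rightarrow> bool" where
  "prefix_sum_condition a b \<longleftrightarrow>
     (\<exists>\<sigma>. a \<sigma> \<noteq> 0 \<and> (\<forall>i<\<sigma>. a i = 0) \<and> (\<forall>i. 0 \<le> a i \<and> 0 \<le> b i) \<and> (\<forall>i\<le>\<sigma>. b i = 0) \<and>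
         (\<forall>l>\<sigma>. fsum b (\<lambda>i. i \<le> l) < fsum a (\<lambda>i. i < l)))"

definition staircase_condition :: "(int \<Rightarrow> int) \<Rightarrow> (int \<Rightarrow> int) \<Rightarrow> bool" where
  "staircase_condition a b \<longleftrightarrow>
     (\<forall>i. 0 \<le> a i \<and> 0 \<le> b i) \<and> fsum b (\<lambda>_. True) < fsum a (\<lambda>_. True) \<and>
     (\<forall>\<alpha> \<beta>. (\<alpha>, \<beta>) \<in> Rrect (fsum a (\<lambda>_. True)) (fsum b (\<lambda>_. True)) \<and> \<beta> \<ge> \<alpha> - 1
        \<longrightarrow> (\<alpha>, \<beta>) \<in> Lset a b)"

lemma difference_condition_iff_prefix_sum_condition:
  assumes fa: "finite {i. a i \<noteq> 0}" and fb: "finite {i. b i \<noteq> 0}"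
  shows "difference_condition a (\<lambda>i. a i - b i) \<longleftrightarrow> prefix_sum_condition a b"
proof
  assume "difference_condition a (\<lambda>i. a i - b i)"
  then obtain \<sigma> where lower: "\<And>i. i < \<sigma> \<Longrightarrow> a i = 0 \<and> b i = 0" and at: "b \<sigma> = 0" "a \<sigma> > 0"
    and upper: "\<And>l. \<sigma> < l \<Longrightarrow> max (a l - b l) 0 \<le> a l \<and> a l < fsum (\<lambda>i. a i - b i) (\<lambda>i. i \<le> l)"
    unfolding difference_condition_def by force
  have "0 \<le> a i \<and> 0 \<le> b i" for i
    using lower[of i] at upper[of i] by (cases i \<sigma> rule: linorder_cases) auto
  moreover have "b i = 0" if "i \<le> \<sigma>" for i
    using that lower[of i] at by (cases "i = \<sigma>") auto
  moreover have "fsum b (\<lambda>i. i \<le> l) < fsum a (\<lambda>i. i < l)" if "\<sigma> < l" for l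
    using upper[OF that] fsum_diff_atMost[OF fa fb, of l] by simp
  ultimately show "prefix_sum_condition a b"
    unfolding prefix_sum_condition_def using lower at by (intro exI[of _ \<sigma>]) auto
next
  assume "prefix_sum_condition a b"
  then obtain \<sigma> where "a \<sigma> \<noteq> 0" "\<forall>i<\<sigma>. a i = 0" and nonneg: "\<And>i. 0 \<le> a i \<and> 0 \<le> b i"
    and "\<forall>i\<le>\<sigma>. b i = 0" and prefix: "\<And>l. \<sigma> < l \<Longrightarrow> fsum b (\<lambda>i. i \<le> l) < fsum a (\<lambda>i. i < l)"
    unfolding prefix_sum_condition_def by blast
  moreover have "max (a l - b l) 0 \<le> a l \<and> a l < fsum (\<lambda>i. a i - b i) (\<lambda>i. i \<le> l)"
    if "\<sigma> < l" for l
    using nonneg[of l] prefix[OF that] fsum_diff_atMost[OF fa fb, of l] by simp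
  moreover have "0 < a \<sigma>"
    using nonneg[of \<sigma>] \<open>a \<sigma> \<noteq> 0\<close> by simp
  ultimately show "difference_condition a (\<lambda>i. a i - b i)"
    unfolding difference_condition_def by (intro exI[of _ \<sigma>]) auto
qed

text \<open>With \<open>l = S(b)\<^sub>\<beta>\<close> one has \<open>\<alpha> \<le> \<beta> + 1 \<le> \<Sum>\<^sub>i\<^sub>\<le>\<^sub>l b\<^sub>i + 1 \<le> \<Sum>\<^sub>i\<^sub><\<^sub>l a\<^sub>i\<close>,
  i.e. \<open>S(a)\<^sub>\<alpha> < l\<close>.\<close>

lemma prefix_sum_condition_imp_Sat_less:
  assumes fa: "finite {i. a i \<noteq> 0}" and fb: "finite {i. b i \<noteq> 0}"
    and "prefix_sum_condition a b"
    and \<alpha>: "1 \<le> \<alpha>" "\<alpha> \<le> fsum a (\<lambda>_. True)" and \<beta>: "1 \<le> \<beta>" "\<beta> \<le> fsum b (\<lambda>_. True)"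
    and "\<alpha> - 1 \<le> \<beta>"
  shows "Sat a \<alpha> < Sat b \<beta>"
proof -
  obtain \<sigma> where nonneg: "\<And>i. 0 \<le> a i" "\<And>i. 0 \<le> b i" and b_low: "\<forall>i\<le>\<sigma>. b i = 0"
    and prefix: "\<forall>l>\<sigma>. fsum b (\<lambda>i. i \<le> l) < fsum a (\<lambda>i. i < l)"
    using assms(3) unfolding prefix_sum_condition_def by blast
  define l where "l = Sat b \<beta>"
  have \<beta>_le: "\<beta> \<le> fsum b (\<lambda>i. i \<le> l)"
    using Sat_le_iff[OF fb nonneg(2) \<beta>, where l = l] unfolding l_def by simp
  have "\<sigma> < l"
  proof (rule ccontr)
    assume "\<not> \<sigma> < l"
    then have "fsum b (\<lambda>i. i \<le> l) = 0" using b_low by (intro fsum_eq_0) auto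
    with \<beta>_le \<beta>(1) show False by simp
  qed
  with prefix \<beta>_le \<open>\<alpha> - 1 \<le> \<beta>\<close> have "\<alpha> \<le> fsum a (\<lambda>i. i < l)" by fastforce
  then show ?thesis
    using Sat_less_iff[OF fa nonneg(1) \<alpha>] unfolding l_def by simp
qed

lemma prefix_sum_condition_imp_staircase_condition:
  assumes fa: "finite {i. a i \<noteq> 0}" and fb: "finite {i. b i \<noteq> 0}"
    and prefix_cond: "prefix_sum_condition a b"
  shows "staircase_condition a b"
proof -
  obtain \<sigma> where nonneg: "\<forall>i. 0 \<le> a i \<and> 0 \<le> b i"
    and prefix: "\<forall>l>\<sigma>. fsum b (\<lambda>i. i \<le> l) < fsum a (\<lambda>i. i < l)"
    using prefix_cond unfolding prefix_sum_condition_def by blast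
  obtain M where M: "\<forall>i\<in>{i. a i \<noteq> 0} \<union> {i. b i \<noteq> 0} \<union> {\<sigma>}. i \<le> M"
    using bdd_above_finite[of "{i. a i \<noteq> 0} \<union> {i. b i \<noteq> 0} \<union> {\<sigma>}"] fa fb
    by (auto simp: bdd_above_def)
  have "fsum b (\<lambda>i. i \<le> M + 1) = fsum b (\<lambda>_. True)"
    and "fsum a (\<lambda>i. i < M + 1) = fsum a (\<lambda>_. True)"
    using M by (intro fsum_eq_total; force)+
  moreover have "\<sigma> < M + 1" using M by simp
  with prefix have "fsum b (\<lambda>i. i \<le> M + 1) < fsum a (\<lambda>i. i < M + 1)" by blast
  ultimately have "fsum b (\<lambda>_. True) < fsum a (\<lambda>_. True)" by linarith
  then show ?thesis
    unfolding staircase_condition_def Rrect_def Lset_def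
    using nonneg prefix_sum_condition_imp_Sat_less[OF fa fb prefix_cond] by auto
qed

lemma staircase_conditionD:
  assumes "staircase_condition a b"
  shows "\<And>i. 0 \<le> a i" "\<And>i. 0 \<le> b i" "fsum b (\<lambda>_. True) < fsum a (\<lambda>_. True)"
    "\<And>\<alpha> \<beta>. \<lbrakk>1 \<le> \<alpha>; \<alpha> \<le> fsum a (\<lambda>_. True); 1 \<le> \<beta>; \<beta> \<le> fsum b (\<lambda>_. True); \<alpha> - 1 \<le> \<beta>\<rbrakk>
      \<Longrightarrow> Sat a \<alpha> < Sat b \<beta>"
  using assms unfolding staircase_condition_def Rrect_def Lset_def by auto

text \<open>Test the staircase at \<open>\<alpha> = \<Sum>\<^sub>i\<^sub><\<^sub>l a\<^sub>i + 1\<close>, \<open>\<beta> = \<Sum>\<^sub>i\<^sub>\<le>\<^sub>l b\<^sub>i\<close>: then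
  \<open>S(b)\<^sub>\<beta> \<le> l \<le> S(a)\<^sub>\<alpha>\<close>.\<close>

lemma staircase_condition_imp_prefix_less:
  assumes fa: "finite {i. a i \<noteq> 0}" and fb: "finite {i. b i \<noteq> 0}"
    and stair: "staircase_condition a b" and pos: "0 < fsum b (\<lambda>i. i \<le> l)"
  shows "fsum b (\<lambda>i. i \<le> l) < fsum a (\<lambda>i. i < l)"
proof (rule ccontr)
  define \<alpha> \<beta> where "\<alpha> = fsum a (\<lambda>i. i < l) + 1" and "\<beta> = fsum b (\<lambda>i. i \<le> l)"
  assume "\<not> fsum b (\<lambda>i. i \<le> l) < fsum a (\<lambda>i. i < l)"
  then have "\<alpha> - 1 \<le> \<beta>" unfolding \<alpha>_def \<beta>_def by simp
  note nonneg = staircase_conditionD(1,2)[OF stair]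
  have \<beta>: "1 \<le> \<beta>" "\<beta> \<le> fsum b (\<lambda>_. True)"
    using pos fsum_mono_pred[OF fb nonneg(2), of "\<lambda>i. i \<le> l" "\<lambda>_. True"] unfolding \<beta>_def by simp_all
  have \<alpha>: "1 \<le> \<alpha>" "\<alpha> \<le> fsum a (\<lambda>_. True)"
    using fsum_nonneg[of a, OF nonneg(1)] \<open>\<alpha> - 1 \<le> \<beta>\<close> \<beta>(2) staircase_conditionD(3)[OF stair]
    unfolding \<alpha>_def by (simp, linarith)
  have "Sat b \<beta> \<le> l"
    using Sat_le_iff[OF fb nonneg(2) \<beta>] unfolding \<beta>_def by simp
  moreover have "\<not> Sat a \<alpha> < l"
    using Sat_less_iff[OF fa nonneg(1) \<alpha>] unfolding \<alpha>_def by simp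
  ultimately show False
    using staircase_conditionD(4)[OF stair \<alpha> \<beta> \<open>\<alpha> - 1 \<le> \<beta>\<close>] by simp
qed

lemma staircase_condition_imp_prefix_sum_condition:
  assumes fa: "finite {i. a i \<noteq> 0}" and fb: "finite {i. b i \<noteq> 0}"
    and stair: "staircase_condition a b"
  shows "prefix_sum_condition a b"
proof -
  note nonneg = staircase_conditionD(1,2)[OF stair]
  have "{i. a i \<noteq> 0} \<noteq> {}"
    using staircase_conditionD(3)[OF stair] fsum_nonneg[of b "\<lambda>_. True", OF nonneg(2)]
    unfolding fsum_def by (cases "{i. a i \<noteq> 0} = {}") auto
  define \<sigma> where "\<sigma> = Min {i. a i \<noteq> 0}"
  have a\<sigma>: "a \<sigma> \<noteq> 0" and a_low: "\<forall>i<\<sigma>. a i = 0"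
    unfolding \<sigma>_def using Min_in[OF fa] Min_le[OF fa] \<open>{i. a i \<noteq> 0} \<noteq> {}\<close> by force+
  have b_low: "b i = 0" if "i \<le> \<sigma>" for i
  proof (rule ccontr)
    assume "b i \<noteq> 0"
    then have "0 < fsum b (\<lambda>j. j \<le> i)"
      using nonneg(2)[of i] fsum_atMost_eq_lessThan_plus[OF fb, of i]
        fsum_nonneg[of b "\<lambda>j. j < i", OF nonneg(2)] by simp
    then have "0 < fsum a (\<lambda>j. j < i)"
      using staircase_condition_imp_prefix_less[OF fa fb stair] by fastforce
    moreover have "fsum a (\<lambda>j. j < i) = 0"
      using a_low that by (intro fsum_eq_0) auto
    ultimately show False by simp
  qed
  have "fsum b (\<lambda>i. i \<le> l) < fsum a (\<lambda>i. i < l)" if "\<sigma> < l" for l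
  proof (cases "fsum b (\<lambda>i. i \<le> l) = 0")
    case True
    have "fsum a (\<lambda>i. i \<le> \<sigma>) = a \<sigma>"
      using fsum_atMost_eq_lessThan_plus[OF fa, of \<sigma>] fsum_eq_0[of "\<lambda>i. i < \<sigma>" a] a_low by simp
    moreover have "fsum a (\<lambda>i. i \<le> \<sigma>) \<le> fsum a (\<lambda>i. i < l)"
      using that by (intro fsum_mono_pred[OF fa nonneg(1)]) simp
    ultimately show ?thesis
      using True a\<sigma> nonneg(1)[of \<sigma>] by simp
  next
    case False
    then show ?thesis
      using staircase_condition_imp_prefix_less[OF fa fb stair]
        fsum_nonneg[of b "\<lambda>i. i \<le> l", OF nonneg(2)] by simp
  qed
  then show ?thesis
    unfolding prefix_sum_condition_def using a\<sigma> a_low nonneg b_low by blast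
qed

theorem lemma5p1p1:
  fixes a b :: "int \<Rightarrow> int"
  assumes fa: "finite {i. a i \<noteq> 0}" and fb: "finite {i. b i \<noteq> 0}"
  defines "q \<equiv> (\<lambda>i. a i - b i)"
  defines "m \<equiv> fsum a (\<lambda>_. True)"
  defines "n \<equiv> fsum b (\<lambda>_. True)"
  shows
   "((\<exists>\<sigma>. q \<sigma> \<noteq> 0 \<and> (\<forall>i<\<sigma>. q i = 0) \<and>
         (\<forall>l<\<sigma>. a l = 0) \<and>
         a \<sigma> = q \<sigma> \<and> q \<sigma> > 0 \<and>
         (\<forall>l>\<sigma>. max (q l) 0 \<le> a l \<and> a l < fsum q (\<lambda>i. i \<le> l)))
     \<longleftrightarrow>
     (\<exists>\<sigma>. a \<sigma> \<noteq> 0 \<and> (\<forall>i<\<sigma>. a i = 0) \<and>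
         (\<forall>i. 0 \<le> a i \<and> 0 \<le> b i) \<and>
         (\<forall>i\<le>\<sigma>. b i = 0) \<and>
         (\<forall>l>\<sigma>. fsum b (\<lambda>i. i \<le> l) < fsum a (\<lambda>i. i < l))))
    \<and>
    ((\<exists>\<sigma>. a \<sigma> \<noteq> 0 \<and> (\<forall>i<\<sigma>. a i = 0) \<and>
         (\<forall>i. 0 \<le> a i \<and> 0 \<le> b i) \<and>
         (\<forall>i\<le>\<sigma>. b i = 0) \<and>
         (\<forall>l>\<sigma>. fsum b (\<lambda>i. i \<le> l) < fsum a (\<lambda>i. i < l)))
     \<longleftrightarrow>
     ((\<forall>i. 0 \<le> a i \<and> 0 \<le> b i) \<and> n < m \<and>
      (\<forall>\<alpha> \<beta>. (\<alpha>, \<beta>) \<in> Rrect m n \<and> \<beta> \<ge> \<alpha> - 1 \<longrightarrow> (\<alpha>, \<beta>) \<in> Lset a b)))"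
proof -
  have "difference_condition a q \<longleftrightarrow> prefix_sum_condition a b"
    unfolding q_def by (rule difference_condition_iff_prefix_sum_condition[OF fa fb])
  moreover have "prefix_sum_condition a b \<longleftrightarrow> staircase_condition a b"
    using prefix_sum_condition_imp_staircase_condition[OF fa fb]
      staircase_condition_imp_prefix_sum_condition[OF fa fb] by blast
  ultimately show ?thesis
    unfolding difference_condition_def prefix_sum_condition_def staircase_condition_def m_def n_def
    by blast
qed

end
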